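(* Let $q$ be a prime power with $q\not\equiv -1\pmod 3$, let $G=\mathrm{SU}_3(q)$, and let $\mathcal{C}$ be the $G$-conjugacy class $C_3^{(0,0)}$. Then $K_{\mathcal{C}}$ is irreducible.
   Context: $\mathrm{SU}_3(q)$ is the group of determinant-one matrices $M\in\mathrm{GL}_3(q^2)$ with $M^*JM=J$, where $J$ has ones on the anti-diagonal and zeros elsewhere and $M^*$ is the transpose of $M$ with every entry raised to the $q$-th power. $C_3^{(0,0)}$ is the $\mathrm{SU}_3(q)$-conjugacy class of $\begin{pmatrix}1&1&\alpha\\0&1&-1\\0&0&1\end{pmatrix}$ where $\alpha\in\mathbb{F}_{q^2}^\times$ satisfies $\alpha+\alpha^q+1=0$. For a finite group $G$ and a subset $\mathcal{C}\subseteq G\setminus\{1\}$ closed under conjugation, the Killing form is $K_{\mathcal{C}}(a,b)=|C_G(ab)\cap\mathcal{C}|$ on the basis $\mathcal{C}$; it is irreducible if the graph with vertex set $\mathcal{C}$, in which distinct $a,b$ are adjacent iff $C_G(ab)\cap\mathcal{C}\neq\emptyset$, is connected. *)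

theory Defs
  imports "HOL-Analysis.Analysis" "HOL-Library.Numeral_Type" "HOL-Computational_Algebra.Primes"
begin

text \<open>Matrices over a finite field 'a, which plays the role of F_(q^2).
  Entries are indexed by the type 3 via the vector notation (rows/columns 1,2,3).\<close>

definition prime_power :: "nat \<Rightarrow> bool" where
  "prime_power q \<longleftrightarrow> (\<exists>p k. prime p \<and> k > 0 \<and> q = p ^ k)"

definition antidiag_J :: "'a::field ^ 3 ^ 3" where
  "antidiag_J = vector [vector [0, 0, 1], vector [0, 1, 0], vector [1, 0, 0]]"

definition star_q :: "nat \<Rightarrow> 'a::field ^ 3 ^ 3 \<Rightarrow> 'a ^ 3 ^ 3" where
  "star_q q M = transpose (\<chi> i j. (M $ i $ j) ^ q)"

definition SU3 :: "nat \<Rightarrow> ('a::field ^ 3 ^ 3) set" where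
  "SU3 q = {M. det M = 1 \<and> star_q q M ** antidiag_J ** M = antidiag_J}"

definition u_elt :: "'a::field \<Rightarrow> 'a ^ 3 ^ 3" where
  "u_elt \<alpha> = vector [vector [1, 1, \<alpha>], vector [0, 1, -1], vector [0, 0, 1]]"

definition conj_class :: "nat \<Rightarrow> 'a::field ^ 3 ^ 3 \<Rightarrow> ('a ^ 3 ^ 3) set" where
  "conj_class q x = {g ** x ** matrix_inv g | g. g \<in> SU3 q}"

text \<open>Killing form irreducibility: the graph on C, where distinct a, b are adjacent
  iff the centraliser of ab meets C, is connected.\<close>
definition killing_adj :: "('a::field ^ 3 ^ 3) set \<Rightarrow> 'a ^ 3 ^ 3 \<Rightarrow> 'a ^ 3 ^ 3 \<Rightarrow> bool" where
  "killing_adj C a b \<longleftrightarrow> a \<in> C \<and> b \<in> C \<and> a \<noteq> b \<and>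
     (\<exists>c\<in>C. c ** (a ** b) = (a ** b) ** c)"

definition killing_irreducible :: "('a::field ^ 3 ^ 3) set \<Rightarrow> bool" where
  "killing_irreducible C \<longleftrightarrow>
     (\<forall>a\<in>C. \<forall>b\<in>C. (a, b) \<in> {(x, y). killing_adj C x y}\<^sup>*)"

end

theory Submission
  imports Defs "HOL-Algebra.Multiplicative_Group"
begin

(*
  The Frobenius a |-> a^q is an involutive automorphism of the field, and the Killing graph of C is
  invariant under conjugation by G = SU_3(q). Hence the g in G for which g u g^-1 lies in the
  connected component of u = u_elt alpha form a subgroup; as G acts transitively on C, it suffices
  that this subgroup contains the upper triangular matrices and the Weyl element w, which generate G
  by the Bruhat decomposition.
  The elements of the unitriangular group U outside its centre are the unip b c with b ~= 0. When
  q is not 2 mod 3, a |-> a^2 / a^q is a bijection of the nonzero elements, so the diagonal torus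
  conjugates u to every level b, and conjugation within U then adjusts c: all of them lie in C.
  Any two of them are adjacent, since their product either lies in U outside the centre, hence in C,
  or is central and commutes with u. Conjugating u by an upper triangular matrix gives such an
  element, and for w an explicit element of U is adjacent to w u w^-1.
*)

definition nonzero_mult_group :: "'a::field monoid" where
  "nonzero_mult_group = \<lparr>carrier = UNIV - {0}, mult = (*), one = 1\<rparr>"

lemma group_nonzero_mult_group: "group (nonzero_mult_group :: 'a::field monoid)"
proof (rule groupI)
  show "\<exists>y\<in>carrier nonzero_mult_group. y \<otimes>\<^bsub>nonzero_mult_group\<^esub> x = \<one>\<^bsub>nonzero_mult_group\<^esub>"
    if "x \<in> carrier nonzero_mult_group" for x :: 'a
    using that by (intro bexI[of _ "inverse x"]) (auto simp: nonzero_mult_group_def)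
qed (auto simp: nonzero_mult_group_def)

text \<open>The library's \<open>finite_field_power_card_eq_same\<close> is only stated for the class \<open>finite_field\<close>.\<close>

lemma power_CARD_eq_same:
  fixes x :: "'a :: {field, finite}"
  shows "x ^ CARD('a) = x"
proof (cases "x = 0")
  case False
  interpret group "nonzero_mult_group :: 'a monoid" by (rule group_nonzero_mult_group)
  have pow: "y [^]\<^bsub>nonzero_mult_group\<^esub> n = y ^ n" for y :: 'a and n :: nat
    by (induction n) (simp_all add: nonzero_mult_group_def)
  have "order (nonzero_mult_group :: 'a monoid) = CARD('a) - 1"
    by (simp add: order_def nonzero_mult_group_def card_Diff_singleton)
  moreover have "x [^]\<^bsub>nonzero_mult_group\<^esub> order (nonzero_mult_group :: 'a monoid) = 1"
    using pow_order_eq_1[of x] False by (simp add: nonzero_mult_group_def)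
  ultimately have "x ^ (CARD('a) - 1) = 1"
    by (simp only: pow)
  moreover have "CARD('a) \<noteq> 0"
    by simp
  ultimately show ?thesis
    by (metis power_eq_if mult_1_right)
qed simp

lemma of_nat_CARD_eq_0: "of_nat CARD('a) = (0 :: 'a :: {ring_1, finite})"
proof -
  have "(\<Sum>y\<in>(UNIV::'a set). y + 1) = (\<Sum>y\<in>(UNIV::'a set). y)"
    by (rule sum.reindex_bij_witness[of _ "\<lambda>y. y - 1" "\<lambda>y. y + 1"]) auto
  then show ?thesis
    by (simp add: sum.distrib)
qed

lemma CHAR_eq_if_CARD_eq_prime_power:
  assumes "prime p" and "CARD('a :: {field, finite}) = p ^ m"
  shows "CHAR('a) = p"
proof -
  have "prime CHAR('a)"
    using prime_CHAR_semidom[where ?'a = 'a] finite_imp_CHAR_pos[where ?'a = 'a] by auto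
  moreover have "CHAR('a) dvd p ^ m"
    using of_nat_CARD_eq_0[where ?'a = 'a] assms(2) of_nat_eq_0_iff_char_dvd by metis
  then have "CHAR('a) dvd p"
    using \<open>prime CHAR('a)\<close> prime_dvd_power by blast
  ultimately show ?thesis
    using assms(1) primes_dvd_imp_eq by blast
qed

lemma finite_field_frobenius_add:
  fixes x y :: "'a :: {field, finite}"
  assumes "prime_power q" and "CARD('a) = q ^ n"
  shows "(x + y) ^ q = x ^ q + y ^ q"
proof -
  obtain p k where "prime p" and q: "q = p ^ k"
    using assms(1) unfolding prime_power_def by blast
  moreover have "CARD('a) = p ^ (k * n)"
    using assms(2) q by (simp add: power_mult)
  ultimately have "CHAR('a) = p"
    using CHAR_eq_if_CARD_eq_prime_power[where ?'a = 'a] by blast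
  then show ?thesis
    using freshmans_dream' \<open>prime p\<close> q by blast
qed

lemma finite_field_frobenius_involution:
  fixes x :: "'a :: {field, finite}"
  assumes "CARD('a) = q ^ 2"
  shows "(x ^ q) ^ q = x"
  using power_CARD_eq_same[of x] assms by (simp add: power_mult[symmetric] power2_eq_square)

lemma cube_root_of_unity_eq_1:
  fixes k :: "'a :: field"
  assumes "k ^ 3 = 1" and "k ^ q = k ^ 2" and "q mod 3 \<noteq> 2"
  shows "k = 1"
proof -
  have "k ^ q = (k ^ 3) ^ (q div 3) * k ^ (q mod 3)"
    by (metis div_mult_mod_eq power_add power_mult mult.commute)
  then have "k ^ (q mod 3) = k ^ 2"
    using assms(1,2) by simp
  moreover have "q mod 3 = 0 \<or> q mod 3 = 1"
    using assms(3) by linarith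
  moreover have "k \<noteq> 0"
    using assms(1) by auto
  ultimately consider "k * k = 1" | "k * k = k * 1"
    by (auto simp: power2_eq_square)
  then show ?thesis
  proof cases
    case 1
    then have "k = k * (k * k)"
      by simp
    also have "\<dots> = 1"
      using assms(1) by (simp add: power3_eq_cube mult.assoc)
    finally show ?thesis .
  next
    case 2
    then show ?thesis
      using \<open>k \<noteq> 0\<close> mult_left_cancel by blast
  qed
qed

lemma frobenius_eq_square_imp_eq_1:
  fixes k :: "'a :: {field, finite}"
  assumes "CARD('a) = q ^ 2" and "q mod 3 \<noteq> 2" and "k \<noteq> 0" and "k ^ q = k ^ 2"
  shows "k = 1"
proof -
  have "k = (k ^ q) ^ q"
    using finite_field_frobenius_involution assms(1) by metis
  also have "\<dots> = (k ^ q) ^ 2"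
    using assms(4) by (metis power_mult mult.commute)
  also have "\<dots> = k * k ^ 3"
    using assms(4) by (simp add: power2_eq_square power3_eq_cube)
  finally have "k ^ 3 = 1"
    using assms(3) by simp
  then show ?thesis
    using cube_root_of_unity_eq_1 assms(2,4) by blast
qed

lemma finite_field_exists_square_eq_mult_frobenius:
  fixes b :: "'a :: {field, finite}"
  assumes "CARD('a) = q ^ 2" and "q mod 3 \<noteq> 2" and "b \<noteq> 0"
  shows "\<exists>a. a \<noteq> 0 \<and> a * a = b * a ^ q"
proof -
  define f :: "'a \<Rightarrow> 'a" where "f a = a * a / a ^ q" for a
  have "inj_on f (UNIV - {0})"
  proof (rule inj_onI)
    fix a c assume "a \<in> UNIV - {0}" and "c \<in> UNIV - {0}" and "f a = f c"
    then have "f (a / c) = 1" and "a / c \<noteq> 0"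
      by (auto simp: f_def power_divide field_simps)
    then have "(a / c) ^ q = (a / c) ^ 2"
      by (simp add: f_def power2_eq_square)
    then have "a / c = 1"
      using frobenius_eq_square_imp_eq_1 assms(1,2) \<open>a / c \<noteq> 0\<close> by blast
    then show "a = c"
      using \<open>a / c \<noteq> 0\<close> by simp
  qed
  moreover have "f ` (UNIV - {0}) \<subseteq> UNIV - {0}"
    by (auto simp: f_def)
  ultimately have "f ` (UNIV - {0}) = UNIV - {0}"
    by (simp add: endo_inj_surj)
  then have "b \<in> f ` (UNIV - {0})"
    using assms(3) by simp
  then obtain a where "a \<noteq> 0" and "b = f a"
    by blast
  then show ?thesis
    by (intro exI[of _ a]) (simp add: f_def)
qed

definition mat3 :: "'a::zero \<Rightarrow> 'a \<Rightarrow> 'a \<Rightarrow> 'a \<Rightarrow> 'a \<Rightarrow> 'a \<Rightarrow> 'a \<Rightarrow> 'a \<Rightarrow> 'a \<Rightarrow> 'a^3^3" where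
  "mat3 a b c d e f g h i = vector [vector [a, b, c], vector [d, e, f], vector [g, h, i]]"

lemma mat3_nth [simp]:
  "mat3 a b c d e f g h i $ 1 $ 1 = a" "mat3 a b c d e f g h i $ 1 $ 2 = b"
  "mat3 a b c d e f g h i $ 1 $ 3 = c" "mat3 a b c d e f g h i $ 2 $ 1 = d"
  "mat3 a b c d e f g h i $ 2 $ 2 = e" "mat3 a b c d e f g h i $ 2 $ 3 = f"
  "mat3 a b c d e f g h i $ 3 $ 1 = g" "mat3 a b c d e f g h i $ 3 $ 2 = h"
  "mat3 a b c d e f g h i $ 3 $ 3 = i"
  by (simp_all add: mat3_def)

lemma mat3_entries: "M = mat3 (M$1$1) (M$1$2) (M$1$3) (M$2$1) (M$2$2) (M$2$3) (M$3$1) (M$3$2) (M$3$3)"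
  by (simp add: vec_eq_iff forall_3)

lemma mat3_eq_iff [simp]:
  "mat3 a b c d e f g h i = mat3 a' b' c' d' e' f' g' h' i' \<longleftrightarrow>
    a = a' \<and> b = b' \<and> c = c' \<and> d = d' \<and> e = e' \<and> f = f' \<and> g = g' \<and> h = h' \<and> i = i'"
  by (auto simp add: vec_eq_iff forall_3)

lemma mat3_mult [simp]:
  "mat3 a b c d e f g h i ** mat3 a' b' c' d' e' f' g' h' i' =
   mat3 (a*a' + b*d' + c*g') (a*b' + b*e' + c*h') (a*c' + b*f' + c*i')
      (d*a' + e*d' + f*g') (d*b' + e*e' + f*h') (d*c' + e*f' + f*i')
      (g*a' + h*d' + i*g') (g*b' + h*e' + i*h') (g*c' + h*f' + i*i')"
  by (simp add: vec_eq_iff forall_3 matrix_matrix_mult_def sum_3)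

lemma det_mat3:
  "det (mat3 a b c d e f g h i :: 'a::comm_ring_1^3^3) = a*e*i + b*f*g + c*d*h - a*f*h - b*d*i - c*e*g"
  by (simp add: det_3)

lemma star_q_mat3:
  "star_q q (mat3 a b c d e f g h i :: 'a::field^3^3) =
   mat3 (a^q) (d^q) (g^q) (b^q) (e^q) (h^q) (c^q) (f^q) (i^q)"
  by (simp add: star_q_def vec_eq_iff forall_3 transpose_def)

lemma antidiag_J_mat3: "antidiag_J = mat3 0 0 1 0 1 0 1 0 0"
  by (simp add: antidiag_J_def mat3_def)

lemma u_elt_mat3: "u_elt \<alpha> = mat3 1 1 \<alpha> 0 1 (-1) 0 0 1"
  by (simp add: u_elt_def mat3_def)

lemma mat_1_mat3: "(mat 1 :: 'a::{zero,one}^3^3) = mat3 1 0 0 0 1 0 0 0 1"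
  by (simp add: vec_eq_iff forall_3 mat_def)

lemma matrix_inv_right:
  fixes A :: "'a::field^'n^'n"
  assumes "invertible A"
  shows "A ** matrix_inv A = mat 1"
  using someI_ex[OF assms[unfolded invertible_def]] by (simp add: matrix_inv_def)

lemma matrix_inv_left:
  fixes A :: "'a::field^'n^'n"
  assumes "invertible A"
  shows "matrix_inv A ** A = mat 1"
  using someI_ex[OF assms[unfolded invertible_def]] by (simp add: matrix_inv_def)

definition matrix_conj :: "'a::field^'n^'n \<Rightarrow> 'a^'n^'n \<Rightarrow> 'a^'n^'n" where
  "matrix_conj A Y = A ** Y ** matrix_inv A"

lemma matrix_conj_eq_iff:
  fixes A :: "'a::field^'n^'n"
  assumes "invertible A"
  shows "matrix_conj A Y = Z \<longleftrightarrow> Z ** A = A ** Y"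
  using matrix_inv_left[OF assms] matrix_inv_right[OF assms] unfolding matrix_conj_def
  by (metis matrix_mul_assoc matrix_mul_rid)

lemma matrix_conj_mult:
  fixes A :: "'a::field^'n^'n"
  assumes "invertible A"
  shows "matrix_conj A (Y ** Z) = matrix_conj A Y ** matrix_conj A Z"
  using matrix_inv_left[OF assms] unfolding matrix_conj_def
  by (metis matrix_mul_assoc matrix_mul_rid)

lemma matrix_conj_inj:
  fixes A :: "'a::field^'n^'n"
  assumes "invertible A" and "matrix_conj A Y = matrix_conj A Z"
  shows "Y = Z"
proof -
  have cancel: "matrix_inv A ** (A ** W) = W" for W
    using matrix_inv_left[OF assms(1)] by (metis matrix_mul_assoc matrix_mul_lid)
  have "A ** Y = A ** Z"
    using assms matrix_conj_eq_iff by metis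
  then show ?thesis
    using cancel by metis
qed

lemma matrix_conj_compose:
  fixes A B :: "'a::field^'n^'n"
  assumes "invertible A" and "invertible B"
  shows "matrix_conj (A ** B) Y = matrix_conj A (matrix_conj B Y)"
proof -
  have "matrix_conj A (matrix_conj B Y) ** (A ** B) = (A ** B) ** Y"
    using assms by (metis matrix_conj_eq_iff matrix_mul_assoc)
  then show ?thesis
    using assms invertible_mult matrix_conj_eq_iff by blast
qed

locale SU3_conj_class =
  fixes q :: nat and x :: "'a::field^3^3"
  assumes frobenius_add: "\<And>a b :: 'a. (a + b) ^ q = a ^ q + b ^ q"
    and base_in_SU3: "x \<in> SU3 q"
begin

abbreviation "C \<equiv> conj_class q x"
abbreviation "killing_graph \<equiv> {(a, b). killing_adj C a b}"

lemma q_pos: "q > 0"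
proof (rule ccontr)
  assume "\<not> q > 0"
  then have "(1::'a) = 1 + 1"
    using frobenius_add[of 0 0] by simp
  then show False
    by (metis add_cancel_left_right one_neq_zero)
qed

lemma zero_power_q [simp]: "(0::'a) ^ q = 0"
  using q_pos by simp

lemma frobenius_uminus [simp]: "(- a :: 'a) ^ q = - (a ^ q)"
  using frobenius_add[of a "- a"] by (simp add: eq_neg_iff_add_eq_0 add.commute)

lemma frobenius_diff: "(a - b :: 'a) ^ q = a ^ q - b ^ q"
  using frobenius_add[of a "- b"] by simp

lemma star_q_mult: "star_q q (A ** B) = star_q q B ** star_q q (A :: 'a^3^3)"
  by (simp add: vec_eq_iff forall_3 star_q_def transpose_def matrix_matrix_mult_def sum_3
      frobenius_add power_mult_distrib mult.commute)

lemma star_q_mat_1: "star_q q (mat 1) = (mat 1 :: 'a^3^3)"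
  by (simp add: mat_1_mat3 star_q_mat3)

lemma mat_1_in_SU3: "mat 1 \<in> (SU3 q :: ('a^3^3) set)"
  by (simp add: SU3_def star_q_mat_1)

lemma SU3_mult:
  assumes "A \<in> SU3 q" and "B \<in> SU3 q"
  shows "A ** B \<in> (SU3 q :: ('a^3^3) set)"
proof -
  have "star_q q (A ** B) ** antidiag_J ** (A ** B) =
      star_q q B ** (star_q q A ** antidiag_J ** A) ** B"
    by (simp add: star_q_mult matrix_mul_assoc)
  then show ?thesis
    using assms by (simp add: SU3_def det_mul)
qed

lemma SU3_invertible: "A \<in> SU3 q \<Longrightarrow> invertible (A :: 'a^3^3)"
  by (simp add: SU3_def invertible_det_nz)

lemma SU3_matrix_inv:
  assumes "A \<in> SU3 q"
  shows "matrix_inv A \<in> (SU3 q :: ('a^3^3) set)"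
proof -
  let ?B = "matrix_inv A"
  have AB: "A ** ?B = mat 1"
    using matrix_inv_right SU3_invertible assms by blast
  have "star_q q ?B ** antidiag_J ** ?B = star_q q ?B ** (star_q q A ** antidiag_J ** A) ** ?B"
    using assms by (simp add: SU3_def)
  also have "\<dots> = star_q q (A ** ?B) ** antidiag_J ** (A ** ?B)"
    by (simp add: star_q_mult matrix_mul_assoc)
  also have "\<dots> = antidiag_J"
    using AB by (simp add: star_q_mat_1)
  moreover have "det A * det ?B = 1"
    using AB by (metis det_mul det_I)
  ultimately show ?thesis
    using assms by (simp add: SU3_def)
qed

lemma SU3_matrix_conj: "g \<in> SU3 q \<Longrightarrow> y \<in> SU3 q \<Longrightarrow> matrix_conj g y \<in> (SU3 q :: ('a^3^3) set)"
  unfolding matrix_conj_def using SU3_mult SU3_matrix_inv by blast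

lemma conj_class_iff: "y \<in> C \<longleftrightarrow> (\<exists>g \<in> SU3 q. y ** g = g ** x)"
proof -
  have "y \<in> C \<longleftrightarrow> (\<exists>g \<in> SU3 q. matrix_conj g x = y)"
    unfolding conj_class_def matrix_conj_def by blast
  then show ?thesis
    using matrix_conj_eq_iff SU3_invertible by blast
qed

lemma conj_class_closed:
  assumes "y \<in> C" and "g \<in> SU3 q" and "z ** g = g ** y"
  shows "z \<in> C"
proof -
  obtain h where "h \<in> SU3 q" and "y ** h = h ** x"
    using assms(1) conj_class_iff by blast
  then have "z ** (g ** h) = (g ** h) ** x"
    using assms(3) by (metis matrix_mul_assoc)
  then show ?thesis
    using conj_class_iff SU3_mult assms(2) \<open>h \<in> SU3 q\<close> by blast
qed

lemma conj_class_matrix_conj: "y \<in> C \<Longrightarrow> g \<in> SU3 q \<Longrightarrow> matrix_conj g y \<in> C"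
  using conj_class_closed matrix_conj_eq_iff SU3_invertible by blast

lemma conj_class_subset_SU3: "y \<in> C \<Longrightarrow> y \<in> SU3 q"
  unfolding conj_class_def using SU3_matrix_conj[OF _ base_in_SU3] by (auto simp: matrix_conj_def)

lemma base_in_conj_class: "x \<in> C"
  using conj_class_iff mat_1_in_SU3 by fastforce

lemma killing_adj_matrix_conj:
  assumes g: "g \<in> SU3 q" and "killing_adj C a b"
  shows "killing_adj C (matrix_conj g a) (matrix_conj g b)"
proof -
  obtain d where "d \<in> C" and d: "d ** (a ** b) = (a ** b) ** d"
    and "a \<in> C" "b \<in> C" "a \<noteq> b"
    using assms(2) unfolding killing_adj_def by blast
  have "matrix_conj g d ** (matrix_conj g a ** matrix_conj g b) =
      (matrix_conj g a ** matrix_conj g b) ** matrix_conj g d"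
    using d matrix_conj_mult SU3_invertible[OF g] by metis
  moreover have "matrix_conj g a \<noteq> matrix_conj g b"
    using matrix_conj_inj SU3_invertible[OF g] \<open>a \<noteq> b\<close> by blast
  ultimately show ?thesis
    unfolding killing_adj_def using conj_class_matrix_conj g \<open>d \<in> C\<close> \<open>a \<in> C\<close> \<open>b \<in> C\<close>
    by blast
qed

lemma killing_adj_sym:
  assumes "killing_adj C a b"
  shows "killing_adj C b a"
proof -
  obtain d where "d \<in> C" and d: "d ** (a ** b) = (a ** b) ** d"
    and "a \<in> C" "b \<in> C" "a \<noteq> b"
    using assms unfolding killing_adj_def by blast
  define h where "h = matrix_inv a"
  have h: "h \<in> SU3 q" "invertible h"
    unfolding h_def using SU3_matrix_inv SU3_invertible conj_class_subset_SU3 \<open>a \<in> C\<close> by blast+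
  have "(b ** a) ** h = h ** (a ** b)"
    using matrix_inv_right matrix_inv_left SU3_invertible conj_class_subset_SU3 \<open>a \<in> C\<close>
    unfolding h_def by (metis matrix_mul_assoc matrix_mul_lid matrix_mul_rid)
  then have ba: "matrix_conj h (a ** b) = b ** a"
    using matrix_conj_eq_iff h(2) by blast
  have "matrix_conj h d ** (b ** a) = (b ** a) ** matrix_conj h d"
    using d matrix_conj_mult[OF h(2)] ba by metis
  then show ?thesis
    unfolding killing_adj_def
    using conj_class_matrix_conj h(1) \<open>d \<in> C\<close> \<open>a \<in> C\<close> \<open>b \<in> C\<close> \<open>a \<noteq> b\<close>
    by blast
qed

lemma killing_graph_reach_matrix_conj:
  assumes "g \<in> SU3 q" and "(a, b) \<in> killing_graph\<^sup>*"
  shows "(matrix_conj g a, matrix_conj g b) \<in> killing_graph\<^sup>*"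
  using assms(2)
proof (induction rule: rtrancl_induct)
  case (step y z)
  then show ?case
    using killing_adj_matrix_conj[OF assms(1)] by (simp add: rtrancl_into_rtrancl)
qed simp

lemma killing_graph_reach_sym: "(a, b) \<in> killing_graph\<^sup>* \<Longrightarrow> (b, a) \<in> killing_graph\<^sup>*"
proof (induction rule: rtrancl_induct)
  case (step y z)
  then have "(z, y) \<in> killing_graph"
    using killing_adj_sym by simp
  then show ?case
    using step.IH by (rule converse_rtrancl_into_rtrancl)
qed simp

definition preserves_component :: "'a^3^3 \<Rightarrow> bool" where
  "preserves_component g \<longleftrightarrow> g \<in> SU3 q \<and> (x, matrix_conj g x) \<in> killing_graph\<^sup>*"

lemma preserves_componentI:
  assumes "g \<in> SU3 q" and "y ** g = g ** x" and "(x, y) \<in> killing_graph\<^sup>*"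
  shows "preserves_component g"
proof -
  have "matrix_conj g x = y"
    using assms(1,2) matrix_conj_eq_iff[OF SU3_invertible] by blast
  then show ?thesis
    using assms unfolding preserves_component_def by simp
qed

lemma preserves_component_mult:
  assumes "preserves_component g" and "preserves_component h"
  shows "preserves_component (g ** h)"
proof -
  have g: "g \<in> SU3 q" and gx: "(x, matrix_conj g x) \<in> killing_graph\<^sup>*"
    and h: "h \<in> SU3 q" and hx: "(x, matrix_conj h x) \<in> killing_graph\<^sup>*"
    using assms unfolding preserves_component_def by auto
  have "(matrix_conj g x, matrix_conj g (matrix_conj h x)) \<in> killing_graph\<^sup>*"
    using killing_graph_reach_matrix_conj[OF g hx] .
  then have "(x, matrix_conj (g ** h) x) \<in> killing_graph\<^sup>*"
    unfolding matrix_conj_compose[OF SU3_invertible[OF g] SU3_invertible[OF h]]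
    by (rule rtrancl_trans[OF gx])
  then show ?thesis
    unfolding preserves_component_def using SU3_mult g h by blast
qed

lemma killing_irreducible_if_preserves_component:
  assumes "\<And>g. g \<in> SU3 q \<Longrightarrow> preserves_component g"
  shows "killing_irreducible C"
proof -
  have "(x, y) \<in> killing_graph\<^sup>*" if "y \<in> C" for y
    using that assms unfolding conj_class_def preserves_component_def matrix_conj_def by blast
  then show ?thesis
    unfolding killing_irreducible_def using killing_graph_reach_sym by (meson rtrancl_trans)
qed

end

locale SU3_regular_unipotent =
  fixes q :: nat and \<alpha> :: "'a::field"
  assumes frobenius_add: "\<And>a b :: 'a. (a + b) ^ q = a ^ q + b ^ q"
    and frobenius_involution: "\<And>a :: 'a. (a ^ q) ^ q = a"
    and alpha_nonzero: "\<alpha> \<noteq> 0"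
    and alpha_trace: "\<alpha> + \<alpha> ^ q + 1 = 0"
    and exists_square_eq_mult_frobenius: "\<And>b :: 'a. b \<noteq> 0 \<Longrightarrow> \<exists>a. a \<noteq> 0 \<and> a * a = b * a ^ q"
begin

lemma u_elt_in_SU3: "u_elt \<alpha> \<in> SU3 q"
proof -
  have "q \<noteq> 0"
    using frobenius_involution[of 0] by (cases q) simp_all
  moreover have "(- 1 :: 'a) ^ q = - 1"
    using frobenius_add[of 1 "- 1"] \<open>q \<noteq> 0\<close> by (simp add: zero_power add_eq_0_iff)
  ultimately show ?thesis
    using alpha_trace
    by (simp add: SU3_def u_elt_mat3 star_q_mat3 antidiag_J_mat3 det_mat3 algebra_simps)
qed

end

sublocale SU3_regular_unipotent \<subseteq> SU3_conj_class q "u_elt \<alpha>"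
  using frobenius_add u_elt_in_SU3 by unfold_locales

context SU3_regular_unipotent
begin

lemma alpha_frobenius: "\<alpha> ^ q = - 1 - \<alpha>"
  using alpha_trace by (simp add: algebra_simps eq_neg_iff_add_eq_0)

definition unip :: "'a \<Rightarrow> 'a \<Rightarrow> 'a^3^3" where
  "unip b c = mat3 1 b c 0 1 (- (b ^ q)) 0 0 1"

lemma unip_in_SU3_iff: "unip b c \<in> SU3 q \<longleftrightarrow> c + c ^ q + b * b ^ q = 0"
  by (simp add: unip_def SU3_def star_q_mat3 antidiag_J_mat3 det_mat3 frobenius_involution
      algebra_simps)

lemma u_elt_eq_unip: "u_elt \<alpha> = unip 1 \<alpha>"
  by (simp add: u_elt_mat3 unip_def)

lemma unip_mult: "unip b c ** unip b' c' = unip (b + b') (c + c' - b * b' ^ q)"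
  by (simp add: unip_def frobenius_add algebra_simps)

lemma unip_inverse:
  "unip b c ** unip (- b) (- c - b * b ^ q) = mat 1"
  "unip (- b) (- c - b * b ^ q) ** unip b c = mat 1"
  by (simp_all add: unip_mult mat_1_mat3 unip_def)

lemma unip_inverse_in_SU3:
  assumes "unip b c \<in> SU3 q"
  shows "unip (- b) (- c - b * b ^ q) \<in> SU3 q"
  using assms unfolding unip_in_SU3_iff
  by (simp add: frobenius_add frobenius_diff power_mult_distrib frobenius_involution algebra_simps)
    (metis add.inverse_unique)

definition torus :: "'a \<Rightarrow> 'a^3^3" where
  "torus a = mat3 a 0 0 0 (a ^ q / a) 0 0 0 (1 / a ^ q)"

lemma torus_in_SU3: "a \<noteq> 0 \<Longrightarrow> torus a \<in> SU3 q"
  by (simp add: torus_def SU3_def star_q_mat3 antidiag_J_mat3 det_mat3 frobenius_involution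
      power_divide)

lemma unip_torus_conj:
  assumes "a \<noteq> 0" and a: "a * a = b * a ^ q"
  shows "unip b (\<alpha> * a * a ^ q) ** torus a = torus a ** u_elt \<alpha>"
proof -
  have "(a * a) ^ q = (b * a ^ q) ^ q"
    using a by simp
  then have "b ^ q * a = a ^ q * a ^ q"
    by (simp add: power_mult_distrib frobenius_involution mult.commute)
  then show ?thesis
    using assms by (simp add: unip_def torus_def u_elt_mat3 field_simps)
qed

lemma unip_conj_same_level:
  assumes "b \<noteq> 0" and "unip b c \<in> SU3 q" and "unip b c' \<in> SU3 q"
  shows "\<exists>g \<in> SU3 q. unip b c ** g = g ** unip b c'"
proof -
  define d where "d = c - c'"
  have "d + d ^ q = (c + c ^ q + b * b ^ q) - (c' + c' ^ q + b * b ^ q)"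
    unfolding d_def frobenius_diff by (simp add: algebra_simps)
  also have "\<dots> = 0"
    using assms(2,3) unfolding unip_in_SU3_iff by simp
  finally have "d ^ q = - d"
    by (simp add: add_eq_0_iff)
  define n where "n = b * b ^ q"
  have "n \<noteq> 0" and "n ^ q = n"
    using assms(1) by (simp_all add: n_def power_mult_distrib frobenius_involution mult.commute)
  define \<mu> where "\<mu> = \<alpha> * d / n * b"
  have "b * \<mu> ^ q - \<mu> * b ^ q = d"
    using \<open>n \<noteq> 0\<close> \<open>n ^ q = n\<close> \<open>d ^ q = - d\<close> unfolding \<mu>_def
    by (simp add: power_mult_distrib power_divide frobenius_involution alpha_frobenius field_simps)
      (simp add: n_def algebra_simps)
  define \<nu> where "\<nu> = \<alpha> * \<mu> * \<mu> ^ q"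
  have "unip \<mu> \<nu> \<in> SU3 q"
    unfolding unip_in_SU3_iff \<nu>_def
    by (simp add: power_mult_distrib frobenius_involution alpha_frobenius algebra_simps)
  moreover have "c - b * \<mu> ^ q = c' - \<mu> * b ^ q"
    using \<open>b * \<mu> ^ q - \<mu> * b ^ q = d\<close> unfolding d_def by (simp add: algebra_simps)
  then have "unip b c ** unip \<mu> \<nu> = unip \<mu> \<nu> ** unip b c'"
    unfolding unip_mult by (metis add.commute add_diff_eq)
  ultimately show ?thesis
    by blast
qed

lemma unip_in_conj_class:
  assumes "b \<noteq> 0" and "unip b c \<in> SU3 q"
  shows "unip b c \<in> C"
proof -
  obtain a where "a \<noteq> 0" and a: "a * a = b * a ^ q"
    using exists_square_eq_mult_frobenius assms(1) by blast
  have torus_conj: "unip b (\<alpha> * a * a ^ q) ** torus a = torus a ** u_elt \<alpha>"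
    using unip_torus_conj \<open>a \<noteq> 0\<close> a by blast
  then have "unip b (\<alpha> * a * a ^ q) \<in> C"
    using conj_class_iff torus_in_SU3 \<open>a \<noteq> 0\<close> by blast
  moreover have "unip b (\<alpha> * a * a ^ q) \<in> SU3 q"
    using conj_class_subset_SU3 calculation by blast
  ultimately show ?thesis
    using unip_conj_same_level assms conj_class_closed by blast
qed

lemma killing_adj_unip:
  assumes "b \<noteq> 0" and "b' \<noteq> 0" and "unip b c \<in> SU3 q" and "unip b' c' \<in> SU3 q"
    and "unip b c \<noteq> unip b' c'"
  shows "killing_adj C (unip b c) (unip b' c')"
proof -
  have in_C: "unip b c \<in> C" "unip b' c' \<in> C"
    using unip_in_conj_class assms by auto
  have "unip b c ** unip b' c' \<in> SU3 q"
    using SU3_mult assms(3,4) by blast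
  show ?thesis
  proof (cases "b + b' = 0")
    case False
    then have "unip b c ** unip b' c' \<in> C"
      using unip_in_conj_class \<open>unip b c ** unip b' c' \<in> SU3 q\<close> unfolding unip_mult by simp
    then show ?thesis
      unfolding killing_adj_def using in_C assms(5) by blast
  next
    case True
    then have "u_elt \<alpha> ** (unip b c ** unip b' c') = (unip b c ** unip b' c') ** u_elt \<alpha>"
      by (simp add: unip_mult unip_def u_elt_mat3 add_eq_0_iff algebra_simps)
    then show ?thesis
      unfolding killing_adj_def using in_C assms(5) base_in_conj_class by blast
  qed
qed

lemma reach_unip:
  assumes "b \<noteq> 0" and "unip b c \<in> SU3 q"
  shows "(u_elt \<alpha>, unip b c) \<in> killing_graph\<^sup>*"
proof (cases "unip b c = u_elt \<alpha>")
  case False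
  then have "killing_adj C (u_elt \<alpha>) (unip b c)"
    using killing_adj_unip[of 1 b \<alpha> c] assms u_elt_in_SU3 unfolding u_elt_eq_unip by simp
  then show ?thesis
    by auto
qed simp

lemma unitriangular_in_SU3_eq_unip:
  assumes "mat3 1 b c 0 1 f 0 0 1 \<in> SU3 q"
  shows "mat3 1 b c 0 1 f 0 0 1 = unip b c"
proof -
  have "f + b ^ q = 0"
    using assms by (simp add: SU3_def star_q_mat3 antidiag_J_mat3)
  then show ?thesis
    by (simp add: unip_def add_eq_0_iff2)
qed

lemma SU3_lower_left_zero:
  fixes g :: "'a^3^3"
  assumes "g \<in> SU3 q" and "g $ 3 $ 1 = 0"
  obtains a b c e f i where "g = mat3 a b c 0 e f 0 0 i" and "a * e * i = 1"
proof -
  obtain a b c d e f h i where g: "g = mat3 a b c d e f 0 h i"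
    using mat3_entries[of g] assms(2) by metis
  have "d ^ q * d = 0" and "d ^ q * e + a ^ q * h = 0"
    and det: "a * e * i + c * d * h - a * f * h - b * d * i = 1"
    using assms(1) unfolding g by (simp_all add: SU3_def star_q_mat3 antidiag_J_mat3 det_mat3)
  then have "d = 0"
    by auto
  then have "a \<noteq> 0"
    using det by auto
  then have "h = 0"
    using \<open>d ^ q * e + a ^ q * h = 0\<close> \<open>d = 0\<close> by simp
  show thesis
    using that g det \<open>d = 0\<close> \<open>h = 0\<close> by simp
qed

lemma preserves_component_upper:
  assumes "g \<in> SU3 q" and "g $ 3 $ 1 = 0"
  shows "preserves_component g"
proof -
  obtain a b c e f i where g: "g = mat3 a b c 0 e f 0 0 i" and "a * e * i = 1"
    using SU3_lower_left_zero assms by blast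
  then have "a \<noteq> 0" "e \<noteq> 0" "i \<noteq> 0"
    by auto
  define y where "y = mat3 1 (a / e) ((a * \<alpha> - b - a * f / e) / i) 0 1 (- e / i) 0 0 1"
  have conj: "y ** g = g ** u_elt \<alpha>"
    using \<open>e \<noteq> 0\<close> \<open>i \<noteq> 0\<close> by (simp add: y_def g u_elt_mat3 field_simps)
  then have "y \<in> SU3 q"
    using conj_class_iff conj_class_subset_SU3 assms(1) by blast
  then have "y = unip (a / e) ((a * \<alpha> - b - a * f / e) / i)"
    unfolding y_def by (rule unitriangular_in_SU3_eq_unip)
  then have "(u_elt \<alpha>, y) \<in> killing_graph\<^sup>*"
    using reach_unip \<open>y \<in> SU3 q\<close> \<open>a \<noteq> 0\<close> \<open>e \<noteq> 0\<close> by simp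
  then show ?thesis
    using preserves_componentI assms(1) conj by blast
qed

definition weyl :: "'a^3^3" where
  "weyl = mat3 0 0 (-1) 0 (-1) 0 (-1) 0 0"

lemma weyl_in_SU3: "weyl \<in> SU3 q"
  by (simp add: weyl_def SU3_def star_q_mat3 antidiag_J_mat3 det_mat3)

lemma weyl_mult_weyl: "weyl ** weyl = mat 1"
  by (simp add: weyl_def mat_1_mat3)

lemma weyl_conj_u_elt: "mat3 1 0 0 (-1) 1 0 \<alpha> 1 1 ** weyl = weyl ** u_elt \<alpha>"
  by (simp add: weyl_def u_elt_mat3)

lemma one_plus_alpha_frobenius: "(1 + \<alpha>) ^ q = - \<alpha>"
  using frobenius_add[of 1 \<alpha>] alpha_frobenius by simp

lemma one_plus_alpha_nonzero: "1 + \<alpha> \<noteq> 0"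
  using one_plus_alpha_frobenius alpha_nonzero by auto

lemma weyl_conj_unip_in_conj_class:
  "mat3 1 0 0 (- \<alpha> / (1 + \<alpha>)) 1 0 \<alpha> ((1 + \<alpha>) / \<alpha>) 1 \<in> C"
proof -
  define s where "s = 1 + \<alpha>"
  have alpha_q: "\<alpha> ^ q = - s" and s_q: "s ^ q = - \<alpha>" and "s \<noteq> 0"
    using alpha_frobenius one_plus_alpha_frobenius one_plus_alpha_nonzero by (simp_all add: s_def)
  define y where "y = unip (s / \<alpha>) \<alpha>"
  have "y \<in> SU3 q"
    unfolding y_def unip_in_SU3_iff using alpha_nonzero \<open>s \<noteq> 0\<close>
    by (simp only: power_divide power_mult_distrib alpha_q s_q)
      (simp add: field_simps, simp add: s_def algebra_simps)
  then have "y \<in> C"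
    using unip_in_conj_class alpha_nonzero \<open>s \<noteq> 0\<close> unfolding y_def by simp
  moreover have "mat3 1 0 0 (- \<alpha> / s) 1 0 \<alpha> (s / \<alpha>) 1 ** weyl = weyl ** y"
    unfolding weyl_def y_def unip_def using alpha_nonzero \<open>s \<noteq> 0\<close>
    by (simp only: power_divide alpha_q s_q mat3_mult mat3_eq_iff) (simp add: field_simps)
  ultimately show ?thesis
    using conj_class_closed weyl_in_SU3 unfolding s_def by blast
qed

lemma exists_unip_mult_weyl_conj_u_elt_in_conj_class:
  "\<exists>b c. b \<noteq> 0 \<and> unip b c \<in> SU3 q \<and> unip b c ** mat3 1 0 0 (-1) 1 0 \<alpha> 1 1 \<in> C"
proof -
  define s where "s = 1 + \<alpha>"
  have alpha_q: "\<alpha> ^ q = - s" and s_q: "s ^ q = - \<alpha>" and "s \<noteq> 0"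
    using alpha_frobenius one_plus_alpha_frobenius one_plus_alpha_nonzero by (simp_all add: s_def)
  define e' where "e' = mat3 1 0 0 (- \<alpha> / s) 1 0 \<alpha> (s / \<alpha>) 1"
  define v where "v = unip (- 1 / (\<alpha> * s)) (- 1 / (\<alpha> * \<alpha> * s))"
  define b where "b = - 1 / (\<alpha> * \<alpha>)"
  define c where "c = - 1 / (\<alpha> * \<alpha> * s)"
  have v: "v \<in> SU3 q" and w: "unip b c \<in> SU3 q"
    unfolding v_def b_def c_def unip_in_SU3_iff using alpha_nonzero \<open>s \<noteq> 0\<close>
    by (simp_all only: power_divide power_mult_distrib frobenius_uminus alpha_q s_q power_one)
      (simp_all add: field_simps, simp_all add: s_def algebra_simps)
  \<comment> \<open>\<open>v e = e' w\<close> makes \<open>w\<^sup>-\<^sup>1 v e\<close> conjugate to \<open>e'\<close>, the Weyl conjugate of an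
    element of \<open>U\<close>\<close>
  have "v ** mat3 1 0 0 (-1) 1 0 \<alpha> 1 1 = e' ** unip b c"
    unfolding v_def e'_def b_def c_def unip_def using alpha_nonzero \<open>s \<noteq> 0\<close>
    by (simp only: power_divide power_mult_distrib frobenius_uminus alpha_q s_q power_one mat3_mult
        mat3_eq_iff) (simp add: field_simps, simp add: s_def algebra_simps)
  define w' where "w' = unip (- b) (- c - b * b ^ q)"
  have "(w' ** v ** mat3 1 0 0 (-1) 1 0 \<alpha> 1 1) ** w' = w' ** e'"
    using \<open>v ** mat3 1 0 0 (-1) 1 0 \<alpha> 1 1 = e' ** unip b c\<close> unip_inverse(1)[of b c]
    unfolding w'_def by (metis matrix_mul_assoc matrix_mul_rid)
  then have "w' ** v ** mat3 1 0 0 (-1) 1 0 \<alpha> 1 1 \<in> C"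
    using conj_class_closed weyl_conj_unip_in_conj_class unip_inverse_in_SU3 w
    unfolding w'_def e'_def s_def by blast
  moreover have "w' ** v \<in> SU3 q"
    unfolding w'_def using SU3_mult unip_inverse_in_SU3 w v by blast
  moreover have "- b + - 1 / (\<alpha> * s) = 1 / (\<alpha> * \<alpha> * s)"
    using alpha_nonzero \<open>s \<noteq> 0\<close> by (simp add: b_def field_simps) (simp add: s_def)
  then obtain c_u where "w' ** v = unip (1 / (\<alpha> * \<alpha> * s)) c_u"
    unfolding w'_def v_def unip_mult by metis
  moreover have "1 / (\<alpha> * \<alpha> * s) \<noteq> 0"
    using alpha_nonzero \<open>s \<noteq> 0\<close> by simp
  ultimately show ?thesis
    by metis
qed

lemma reach_weyl_conj_u_elt: "(u_elt \<alpha>, mat3 1 0 0 (-1) 1 0 \<alpha> 1 1) \<in> killing_graph\<^sup>*"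
proof -
  let ?e = "mat3 1 0 0 (-1) 1 0 \<alpha> 1 1"
  obtain b c where "b \<noteq> 0" and u: "unip b c \<in> SU3 q" and "unip b c ** ?e \<in> C"
    using exists_unip_mult_weyl_conj_u_elt_in_conj_class by blast
  moreover have "?e \<in> C"
    using conj_class_closed[OF base_in_conj_class weyl_in_SU3] weyl_conj_u_elt by blast
  moreover have "unip b c \<noteq> ?e"
    by (simp add: unip_def)
  \<comment> \<open>the product itself lies in \<open>C\<close> and commutes with itself\<close>
  ultimately have "killing_adj C (unip b c) ?e"
    unfolding killing_adj_def using unip_in_conj_class by blast
  then show ?thesis
    using reach_unip[OF \<open>b \<noteq> 0\<close> u] by (simp add: rtrancl_into_rtrancl)
qed

lemma preserves_component_weyl: "preserves_component weyl"
  by (rule preserves_componentI[OF weyl_in_SU3 weyl_conj_u_elt reach_weyl_conj_u_elt])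

lemma exists_unip_weyl_lower_left_zero:
  fixes g :: "'a^3^3"
  assumes "g \<in> SU3 q" and "g $ 3 $ 1 \<noteq> 0"
  obtains \<beta> \<gamma> where "unip \<beta> \<gamma> \<in> SU3 q" and "(weyl ** (unip \<beta> \<gamma> ** g)) $ 3 $ 1 = 0"
proof -
  define a1 a2 a3 where "a1 = g $ 1 $ 1" and "a2 = g $ 2 $ 1" and "a3 = g $ 3 $ 1"
  have "a3 \<noteq> 0" and "a3 ^ q \<noteq> 0"
    using assms(2) by (simp_all add: a3_def)
  have isotropic: "a1 ^ q * a3 + a2 ^ q * a2 + a3 ^ q * a1 = 0"
  proof -
    have "(star_q q g ** antidiag_J ** g) $ 1 $ 1 = antidiag_J $ 1 $ 1"
      using assms(1) by (simp add: SU3_def)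
    then show ?thesis
      unfolding a1_def a2_def a3_def
      by (simp add: star_q_def antidiag_J_mat3 matrix_matrix_mult_def sum_3 transpose_def add_ac)
  qed
  define \<beta> where "\<beta> = (a2 / a3) ^ q"
  define \<gamma> where "\<gamma> = - (a1 + \<beta> * a2) / a3"
  have \<beta>_q: "\<beta> ^ q = a2 / a3"
    unfolding \<beta>_def by (rule frobenius_involution)
  have "(- (a1 + \<beta> * a2)) ^ q = - (a1 ^ q + a2 / a3 * a2 ^ q)"
    by (simp only: frobenius_uminus frobenius_add power_mult_distrib \<beta>_q)
  then have "\<gamma> ^ q = - (a1 ^ q + a2 / a3 * a2 ^ q) / a3 ^ q"
    unfolding \<gamma>_def power_divide by simp
  then have "\<gamma> + \<gamma> ^ q + \<beta> * \<beta> ^ q = - (a1 ^ q * a3 + a2 ^ q * a2 + a3 ^ q * a1) / (a3 * a3 ^ q)"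
    unfolding \<beta>_q using \<open>a3 \<noteq> 0\<close> \<open>a3 ^ q \<noteq> 0\<close> by (simp add: \<gamma>_def field_simps)
  then have "unip \<beta> \<gamma> \<in> SU3 q"
    unfolding unip_in_SU3_iff isotropic by simp
  moreover have "(weyl ** (unip \<beta> \<gamma> ** g)) $ 3 $ 1 = - (a1 + \<beta> * a2 + \<gamma> * a3)"
    unfolding a1_def a2_def a3_def weyl_def unip_def by (simp add: matrix_matrix_mult_def sum_3)
  moreover have "a1 + \<beta> * a2 + \<gamma> * a3 = 0"
    unfolding \<gamma>_def using \<open>a3 \<noteq> 0\<close> by (simp add: field_simps)
  ultimately show thesis
    using that by simp
qed

lemma preserves_component_SU3:
  assumes "g \<in> SU3 q"
  shows "preserves_component g"
proof (cases "g $ 3 $ 1 = 0")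
  case True
  then show ?thesis
    using preserves_component_upper assms by blast
next
  case False
  then obtain \<beta> \<gamma> where u: "unip \<beta> \<gamma> \<in> SU3 q" and "(weyl ** (unip \<beta> \<gamma> ** g)) $ 3 $ 1 = 0"
    using exists_unip_weyl_lower_left_zero assms by blast
  then have "preserves_component (weyl ** (unip \<beta> \<gamma> ** g))"
    using preserves_component_upper SU3_mult weyl_in_SU3 assms by blast
  moreover have "preserves_component (unip (- \<beta>) (- \<gamma> - \<beta> * \<beta> ^ q))"
    using preserves_component_upper unip_inverse_in_SU3[OF u] by (simp add: unip_def)
  moreover have "g = unip (- \<beta>) (- \<gamma> - \<beta> * \<beta> ^ q) ** (weyl ** (weyl ** (unip \<beta> \<gamma> ** g)))"
    by (simp add: matrix_mul_assoc weyl_mult_weyl unip_inverse(2))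
  ultimately show ?thesis
    using preserves_component_mult preserves_component_weyl by metis
qed

theorem killing_irreducible_u_elt: "killing_irreducible C"
  using killing_irreducible_if_preserves_component preserves_component_SU3 by blast

end

theorem corollary4p11:
  fixes q :: nat and \<alpha> :: "'a::{field, finite}"
  assumes "prime_power q"
    and "CARD('a) = q ^ 2"
    and "q mod 3 \<noteq> 2"
    and "\<alpha> \<noteq> 0"
    and "\<alpha> + \<alpha> ^ q + 1 = 0"
  shows "killing_irreducible (conj_class q (u_elt \<alpha>) :: ('a ^ 3 ^ 3) set)"
proof -
  interpret SU3_regular_unipotent q \<alpha>
  proof
    show "(a + b) ^ q = a ^ q + b ^ q" for a b :: 'a
      using finite_field_frobenius_add assms(1,2) by blast
    show "(a ^ q) ^ q = a" for a :: 'a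
      using finite_field_frobenius_involution assms(2) by blast
    show "b \<noteq> 0 \<Longrightarrow> \<exists>a. a \<noteq> 0 \<and> a * a = b * a ^ q" for b :: 'a
      using finite_field_exists_square_eq_mult_frobenius assms(2,3) by blast
  qed (fact assms(4,5))+
  show ?thesis
    by (rule killing_irreducible_u_elt)
qed

end
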